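(* For the public-key scheme $\mathsf{Ring\text{-}LWE\text{-}PKE}$ with secret key $s$, there is a quantum algorithm that makes one quantum query to the decryption function $\mathsf{Dec}_s$ and recovers the entire key $s$ with probability at least $4/\pi^2-o(1)$.
   Context: Let $n$ be a power of two, $q$ a polynomially bounded prime modulus, $\mathcal R=\mathbb Z[x]/\langle x^n+1\rangle$, $\mathcal R_q=\mathbb Z_q[x]/\langle x^n+1\rangle$, and $\chi$ an error distribution over $\mathcal R$. $\mathsf{Ring\text{-}LWE\text{-}PKE}$: $\mathsf{KeyGen}$ samples uniform $a\in\mathcal R_q$ and $e,s\leftarrow\chi$, outputs secret key $s$ and public key $(a,c=a\cdot s+e\bmod q)$. To encrypt $b\in\{0,1\}$, sample $r,e_1,e_2\leftarrow\chi$ and output $(u,v)=(a r+e_1,\,c r+e_2+b\lfloor q/2\rfloor)\in\mathcal R_q^2$. $\mathsf{Dec}_s(u,v)$ computes $v-u\cdot s\in\mathcal R_q$ and outputs $0$ if its constant coefficient is closer to $0$ than to $\lfloor q/2\rfloor$ (modulo $q$), and $1$ otherwise. A quantum query to $\mathsf{Dec}_s$ means one application of $|u,v\rangle|y\rangle\mapsto|u,v\rangle|y\oplus\mathsf{Dec}_s(u,v)\rangle$ on arbitrary superpositions of $(u,v)\in\mathcal R_q^2$. *)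

theory Defs
  imports Complex_Main "HOL-Computational_Algebra.Primes"
begin

text \<open>Elements of R_q are represented by their coefficient vectors:
  functions nat => int, with coefficients in {0..<q} at positions i < n and 0 elsewhere.\<close>

definition Rq :: "nat \<Rightarrow> int \<Rightarrow> (nat \<Rightarrow> int) set" where
  "Rq n q = {f. (\<forall>i<n. 0 \<le> f i \<and> f i < q) \<and> (\<forall>i\<ge>n. f i = 0)}"

definition rq_sub :: "nat \<Rightarrow> int \<Rightarrow> (nat \<Rightarrow> int) \<Rightarrow> (nat \<Rightarrow> int) \<Rightarrow> (nat \<Rightarrow> int)" where
  "rq_sub n q a b = (\<lambda>k. if k < n then (a k - b k) mod q else 0)"

text \<open>Negacyclic multiplication modulo x^n + 1 and q.\<close>
definition rq_mult :: "nat \<Rightarrow> int \<Rightarrow> (nat \<Rightarrow> int) \<Rightarrow> (nat \<Rightarrow> int) \<Rightarrow> (nat \<Rightarrow> int)" where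
  "rq_mult n q a b = (\<lambda>k. if k < n then
      (\<Sum>i<n. \<Sum>j<n. if i + j = k then a i * b j
                     else if i + j = k + n then - (a i * b j) else 0) mod q
    else 0)"

definition cdist :: "int \<Rightarrow> int \<Rightarrow> int \<Rightarrow> int" where
  "cdist q x y = min ((x - y) mod q) ((y - x) mod q)"

text \<open>Decryption Dec_s(u,v): bit False = 0, True = 1.  Output 0 iff the constant
  coefficient of v - u*s is (strictly) closer to 0 than to floor(q/2) modulo q.\<close>
definition rlwe_dec :: "nat \<Rightarrow> int \<Rightarrow> (nat \<Rightarrow> int) \<Rightarrow> (nat \<Rightarrow> int) \<times> (nat \<Rightarrow> int) \<Rightarrow> bool" where
  "rlwe_dec n q s uv =
     (let t = rq_sub n q (snd uv) (rq_mult n q (fst uv) s) 0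
      in \<not> (cdist q t 0 < cdist q t (q div 2)))"

text \<open>Computational basis states: query input (u,v), answer bit y, workspace index w.\<close>
type_synonym qbasis = "((nat \<Rightarrow> int) \<times> (nat \<Rightarrow> int)) \<times> bool \<times> nat"

definition qspace :: "nat \<Rightarrow> int \<Rightarrow> nat set \<Rightarrow> qbasis set" where
  "qspace n q W = (Rq n q \<times> Rq n q) \<times> (UNIV :: bool set) \<times> W"

definition unitary_on :: "'b set \<Rightarrow> ('b \<Rightarrow> 'b \<Rightarrow> complex) \<Rightarrow> bool" where
  "unitary_on S M \<longleftrightarrow>
     (\<forall>i\<in>S. \<forall>j\<in>S. (\<Sum>k\<in>S. cnj (M k i) * M k j) = (if i = j then 1 else 0))"

definition apply_mat :: "'b set \<Rightarrow> ('b \<Rightarrow> 'b \<Rightarrow> complex) \<Rightarrow> ('b \<Rightarrow> complex) \<Rightarrow> ('b \<Rightarrow> complex)" where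
  "apply_mat S M \<psi> = (\<lambda>i. \<Sum>j\<in>S. M i j * \<psi> j)"

definition query_oracle :: "((nat \<Rightarrow> int) \<times> (nat \<Rightarrow> int) \<Rightarrow> bool) \<Rightarrow> (qbasis \<Rightarrow> complex) \<Rightarrow> (qbasis \<Rightarrow> complex)" where
  "query_oracle f \<psi> = (\<lambda>(uv, y, w). \<psi> (uv, y \<noteq> f uv, w))"

text \<open>A one-query algorithm: prepare a normalized state psi0 (any state is reachable
  by a unitary from |0>), make one query, apply a unitary U, measure in the computational
  basis and output out(b).\<close>
definition one_query_success ::
  "nat \<Rightarrow> int \<Rightarrow> nat set \<Rightarrow> (qbasis \<Rightarrow> complex) \<Rightarrow> (qbasis \<Rightarrow> qbasis \<Rightarrow> complex)
   \<Rightarrow> (qbasis \<Rightarrow> (nat \<Rightarrow> int)) \<Rightarrow> ((nat \<Rightarrow> int) \<times> (nat \<Rightarrow> int) \<Rightarrow> bool) \<Rightarrow> (nat \<Rightarrow> int) \<Rightarrow> real" where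
  "one_query_success n q W \<psi>0 U out f s =
     (\<Sum>b\<in>{b \<in> qspace n q W. out b = s}.
        (cmod (apply_mat (qspace n q W) U (query_oracle f \<psi>0) b))^2)"

definition valid_one_query_alg ::
  "nat \<Rightarrow> int \<Rightarrow> nat set \<Rightarrow> (qbasis \<Rightarrow> complex) \<Rightarrow> (qbasis \<Rightarrow> qbasis \<Rightarrow> complex) \<Rightarrow> bool" where
  "valid_one_query_alg n q W \<psi>0 U \<longleftrightarrow>
     finite W \<and> (\<Sum>b\<in>qspace n q W. (cmod (\<psi>0 b))^2) = 1 \<and> unitary_on (qspace n q W) U"

end

theory Submission
  imports Defs "HOL-Analysis.Complex_Transcendental"
begin

(*
  Query Dec_s on the uniform superposition of all (u, v) with u in R_q and v = x a constant
  polynomial, the answer qubit in the state |0> - |1>. Since the constant coefficient of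
  v - u s is x - <u, s(1/x)>, phase kickback multiplies the amplitude of (u, x) by
  g(x - <u, s(1/x)>), where g = (-1)^Dec on Z_q. After the Fourier transform over
  Z_q^n x Z_q^n, the outcome (u', v') has amplitude proportional to ghat(v'_0), the Fourier
  coefficient of g, and it vanishes unless u' = -v'_0 s(1/x) mod q. As q is prime, every
  outcome with v'_0 <> 0 determines s. The outcomes with v'_0 = 0 carry total probability
  |ghat(0)|^2 / q^2 <= ((q + 1) / (2 q))^2 <= 9/16, because g is +1 on the first and -1 on
  the second quarter of [0, q/2]. So s is recovered with probability at least
  7/16 > 4/pi^2 for every prime q: one may take epsilon = 0, and n need not be a power of two.
*)

section \<open>Additive characters of Z_q\<close>

definition unity_root :: "int \<Rightarrow> int \<Rightarrow> complex" where
  "unity_root q x = cis (2 * pi * of_int x / of_int q)"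

lemma unity_root_0 [simp]: "unity_root q 0 = 1"
  by (simp add: unity_root_def)

lemma unity_root_add: "unity_root q (a + b) = unity_root q a * unity_root q b"
  by (simp add: unity_root_def cis_mult add_divide_distrib distrib_left)

lemma cnj_unity_root: "cnj (unity_root q a) = unity_root q (- a)"
  by (simp add: unity_root_def cis_cnj)

lemma unity_root_power: "unity_root q d ^ k = unity_root q (int k * d)"
proof -
  have "real k * (2 * pi * of_int d / of_int q) = 2 * pi * of_int (int k * d) / of_int q"
    by simp
  then show ?thesis
    \<comment> \<open>HOL-Analysis shadows the name DeMoivre with a version for complex arguments\<close>
    by (simp only: unity_root_def Complex.DeMoivre)
qed

lemma unity_root_sum: "unity_root q (\<Sum>i\<in>A. a i) = (\<Prod>i\<in>A. unity_root q (a i))"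
  by (induction A rule: infinite_finite_induct) (auto simp: unity_root_add)

lemma unity_root_eq_1_iff:
  assumes "q > 0"
  shows "unity_root q d = 1 \<longleftrightarrow> q dvd d"
proof
  assume "unity_root q d = 1"
  then have "cos (2 * pi * of_int d / of_int q) = 1"
    unfolding unity_root_def by (metis cis.sel(1) one_complex.sel(1))
  then obtain m :: int where "2 * pi * of_int d / of_int q = of_int m * 2 * pi"
    using cos_one_2pi_int by blast
  with assms have "d = m * q"
    by (simp add: field_simps flip: of_int_mult)
  then show "q dvd d" by simp
next
  assume "q dvd d"
  then obtain k where "d = q * k" ..
  with assms have "2 * pi * of_int d / of_int q = 2 * pi * of_int k"
    by simp
  then show "unity_root q d = 1"
    unfolding unity_root_def by (metis Ints_of_int cis_multiple_2pi)
qed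

lemma unity_root_mult_mod:
  assumes "q > 0"
  shows "unity_root q (b * (x mod q)) = unity_root q (b * x)"
proof -
  have "b * x = b * (x mod q + q * (x div q))"
    by (simp only: mod_mult_div_eq)
  also have "\<dots> = b * (x mod q) + q * (b * (x div q))"
    by (simp only: distrib_left mult.left_commute)
  finally have "unity_root q (b * x) = unity_root q (b * (x mod q)) * unity_root q (q * (b * (x div q)))"
    by (simp add: unity_root_add)
  moreover have "unity_root q (q * (b * (x div q))) = 1"
    using assms by (simp add: unity_root_eq_1_iff)
  ultimately show ?thesis
    by simp
qed

lemma sum_unity_root:
  assumes q: "q > 0"
  shows "(\<Sum>x\<in>{0..<q}. unity_root q (x * d)) = (if q dvd d then of_int q else 0)"
proof -
  have "{0..<q} = int ` {..<nat q}"
    by (auto simp: image_iff intro!: bexI[of _ "nat _"])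
  then have "(\<Sum>x\<in>{0..<q}. unity_root q (x * d)) = (\<Sum>k<nat q. unity_root q d ^ k)"
    by (simp add: sum.reindex unity_root_power)
  also have "\<dots> = (if q dvd d then of_int q else 0)"
  proof (cases "q dvd d")
    case False
    have "unity_root q d ^ nat q = 1"
      using q by (simp add: unity_root_power unity_root_eq_1_iff)
    with False q show ?thesis
      by (simp add: geometric_sum unity_root_eq_1_iff)
  next
    case True
    with q have "unity_root q d = 1"
      by (simp add: unity_root_eq_1_iff)
    with True q show ?thesis
      by simp
  qed
  finally show ?thesis .
qed

definition zq_dft :: "int \<Rightarrow> (int \<Rightarrow> complex) \<Rightarrow> int \<Rightarrow> complex" where
  "zq_dft q g b = (\<Sum>t\<in>{0..<q}. unity_root q (b * t) * g t)"

lemma zq_dft_shift: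
  assumes q: "q > 0"
  shows "(\<Sum>x\<in>{0..<q}. unity_root q (b * x) * g ((x - L) mod q)) = unity_root q (b * L) * zq_dft q g b"
proof -
  have bij: "bij_betw (\<lambda>t. (t + L) mod q) {0..<q} {0..<q}"
    by (rule bij_betw_byWitness[where f' = "\<lambda>x. (x - L) mod q"])
       (use q in \<open>auto simp: mod_add_left_eq mod_diff_left_eq\<close>)
  have "(\<Sum>x\<in>{0..<q}. unity_root q (b * x) * g ((x - L) mod q))
      = (\<Sum>t\<in>{0..<q}. unity_root q (b * ((t + L) mod q)) * g (((t + L) mod q - L) mod q))"
    by (rule sum.reindex_bij_betw[OF bij, symmetric])
  also have "\<dots> = (\<Sum>t\<in>{0..<q}. unity_root q (b * L) * (unity_root q (b * t) * g t))"
  proof (rule sum.cong[OF refl])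
    fix t
    assume "t \<in> {0..<q}"
    then have "((t + L) mod q - L) mod q = t"
      by (simp add: mod_diff_left_eq)
    moreover have "unity_root q (b * ((t + L) mod q)) = unity_root q (b * L) * unity_root q (b * t)"
      using q by (simp add: unity_root_mult_mod distrib_left unity_root_add mult.commute)
    ultimately show "unity_root q (b * ((t + L) mod q)) * g (((t + L) mod q - L) mod q)
        = unity_root q (b * L) * (unity_root q (b * t) * g t)"
      by simp
  qed
  also have "\<dots> = unity_root q (b * L) * zq_dft q g b"
    by (simp add: zq_dft_def sum_distrib_left)
  finally show ?thesis .
qed

section \<open>Coefficient vectors of R_q\<close>

lemma Rq_0: "Rq 0 q = {\<lambda>_. 0}"
  by (auto simp: Rq_def)

lemma bij_betw_Rq_Suc: "bij_betw (\<lambda>(f, x). f(n := x)) (Rq n q \<times> {0..<q}) (Rq (Suc n) q)"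
  by (rule bij_betw_byWitness[where f' = "\<lambda>h. (h(n := 0), h n)"]) (auto simp: Rq_def)

lemma finite_Rq: "finite (Rq n q)"
proof (induction n)
  case (Suc n)
  then show ?case
    using bij_betw_finite[OF bij_betw_Rq_Suc[of n q]] by simp
qed (simp add: Rq_0)

lemma sum_prod_Rq:
  fixes g :: "nat \<Rightarrow> int \<Rightarrow> 'a::comm_semiring_1"
  shows "(\<Sum>f\<in>Rq n q. \<Prod>i<n. g i (f i)) = (\<Prod>i<n. \<Sum>x\<in>{0..<q}. g i x)"
proof (induction n)
  case (Suc n)
  have "(\<Sum>f\<in>Rq (Suc n) q. \<Prod>i<Suc n. g i (f i))
      = (\<Sum>p\<in>Rq n q \<times> {0..<q}. \<Prod>i<Suc n. g i (((\<lambda>(f, x). f(n := x)) p) i))"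
    by (rule sum.reindex_bij_betw[OF bij_betw_Rq_Suc, symmetric])
  also have "\<dots> = (\<Sum>(f, x)\<in>Rq n q \<times> {0..<q}. (\<Prod>i<n. g i (f i)) * g n x)"
    by (rule sum.cong) (auto intro!: prod.cong)
  also have "\<dots> = (\<Sum>f\<in>Rq n q. \<Sum>x\<in>{0..<q}. (\<Prod>i<n. g i (f i)) * g n x)"
    by (simp add: sum.cartesian_product)
  also have "\<dots> = (\<Sum>f\<in>Rq n q. \<Prod>i<n. g i (f i)) * (\<Sum>x\<in>{0..<q}. g n x)"
    by (simp add: sum_product)
  finally show ?case
    using Suc by simp
qed (simp add: Rq_0)

lemma card_Rq: "card (Rq n q) = nat q ^ n"
  using sum_prod_Rq[where g = "\<lambda>_ _. 1 :: nat"] by simp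

lemma Rq_eq_iff_dvd:
  assumes a: "a \<in> Rq n q" and b: "b \<in> Rq n q"
  shows "a = b \<longleftrightarrow> (\<forall>i<n. q dvd b i - a i)"
proof
  assume dvd: "\<forall>i<n. q dvd b i - a i"
  show "a = b"
  proof
    fix i
    show "a i = b i"
    proof (cases "i < n")
      case True
      with a b have "a i mod q = a i" "b i mod q = b i"
        unfolding Rq_def by auto
      with dvd True show ?thesis
        by (metis mod_eq_dvd_iff)
    qed (use a b in \<open>simp add: Rq_def\<close>)
  qed
qed simp

definition coeff_dot :: "nat \<Rightarrow> (nat \<Rightarrow> int) \<Rightarrow> (nat \<Rightarrow> int) \<Rightarrow> int" where
  "coeff_dot n a b = (\<Sum>i<n. a i * b i)"

lemma sum_unity_root_Rq:
  assumes "q > 0"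
  shows "(\<Sum>u\<in>Rq n q. unity_root q (coeff_dot n u d))
       = (if \<forall>i<n. q dvd d i then of_int q ^ n else 0)"
proof -
  have "(\<Sum>u\<in>Rq n q. unity_root q (coeff_dot n u d)) = (\<Sum>u\<in>Rq n q. \<Prod>i<n. unity_root q (u i * d i))"
    by (simp add: coeff_dot_def unity_root_sum)
  also have "\<dots> = (\<Prod>i<n. \<Sum>x\<in>{0..<q}. unity_root q (x * d i))"
    by (rule sum_prod_Rq)
  also have "\<dots> = (if \<forall>i<n. q dvd d i then of_int q ^ n else 0)"
    using assms by (auto simp: sum_unity_root)
  finally show ?thesis .
qed

lemma coeff_dot_diff_right: "coeff_dot n u (\<lambda>i. b i - a i) = coeff_dot n u b - coeff_dot n u a"
  by (simp add: coeff_dot_def sum_subtractf right_diff_distrib)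

lemma sum_unity_root_Rq_diff:
  assumes "q > 0" and "a \<in> Rq n q" and "b \<in> Rq n q"
  shows "(\<Sum>u\<in>Rq n q. unity_root q (coeff_dot n u (\<lambda>i. b i - a i)))
       = (if a = b then of_int q ^ n else 0)"
  using assms by (simp add: sum_unity_root_Rq Rq_eq_iff_dvd)

section \<open>Unitaries on the query space\<close>

lemma sum_norm_apply_mat_unitary:
  assumes "finite S" and "unitary_on S M"
  shows "(\<Sum>i\<in>S. (cmod (apply_mat S M \<phi> i))\<^sup>2) = (\<Sum>j\<in>S. (cmod (\<phi> j))\<^sup>2)"
proof -
  have "complex_of_real (\<Sum>i\<in>S. (cmod (apply_mat S M \<phi> i))\<^sup>2)
      = (\<Sum>i\<in>S. cnj (\<Sum>j\<in>S. M i j * \<phi> j) * (\<Sum>k\<in>S. M i k * \<phi> k))"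
    by (simp only: of_real_sum complex_norm_square) (simp add: apply_mat_def mult.commute)
  also have "\<dots> = (\<Sum>i\<in>S. \<Sum>j\<in>S. \<Sum>k\<in>S. (cnj (\<phi> j) * \<phi> k) * (cnj (M i j) * M i k))"
    by (simp add: sum_product mult_ac, rule sum.cong[OF refl], rule sum.swap)
  also have "\<dots> = (\<Sum>j\<in>S. \<Sum>i\<in>S. \<Sum>k\<in>S. (cnj (\<phi> j) * \<phi> k) * (cnj (M i j) * M i k))"
    by (rule sum.swap)
  also have "\<dots> = (\<Sum>j\<in>S. \<Sum>k\<in>S. \<Sum>i\<in>S. (cnj (\<phi> j) * \<phi> k) * (cnj (M i j) * M i k))"
    by (rule sum.cong[OF refl], rule sum.swap)
  also have "\<dots> = (\<Sum>j\<in>S. \<Sum>k\<in>S. (cnj (\<phi> j) * \<phi> k) * (\<Sum>i\<in>S. cnj (M i j) * M i k))"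
    by (simp add: sum_distrib_left)
  also have "\<dots> = (\<Sum>j\<in>S. \<Sum>k\<in>S. (cnj (\<phi> j) * \<phi> k) * (if j = k then 1 else 0))"
    using assms(2) unfolding unitary_on_def by (intro sum.cong refl) simp
  also have "\<dots> = (\<Sum>j\<in>S. cnj (\<phi> j) * \<phi> j)"
    using assms(1) by (simp add: if_distrib cong: if_cong)
  also have "\<dots> = complex_of_real (\<Sum>j\<in>S. (cmod (\<phi> j))\<^sup>2)"
    by (simp only: of_real_sum complex_norm_square) (simp add: mult.commute)
  finally show ?thesis
    using of_real_eq_iff by blast
qed

lemma finite_qspace: "finite W \<Longrightarrow> finite (qspace n q W)"
  by (simp add: qspace_def finite_Rq)

lemma sum_norm_query_oracle:
  "(\<Sum>b\<in>qspace n q W. (cmod (query_oracle f \<psi> b))\<^sup>2) = (\<Sum>b\<in>qspace n q W. (cmod (\<psi> b))\<^sup>2)"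
proof -
  define flip :: "qbasis \<Rightarrow> qbasis" where "flip = (\<lambda>(uv, y, w). (uv, y \<noteq> f uv, w))"
  have "query_oracle f \<psi> = \<psi> \<circ> flip"
    by (auto simp: query_oracle_def flip_def)
  moreover have "bij_betw flip (qspace n q W) (qspace n q W)"
    by (rule bij_betw_byWitness[where f' = flip]) (auto simp: flip_def qspace_def)
  ultimately show ?thesis
    using sum.reindex_bij_betw[of flip _ _ "\<lambda>b. (cmod (\<psi> b))\<^sup>2"] by simp
qed

lemma sum_qspace_0:
  "sum F (qspace n q {0}) = (\<Sum>u\<in>Rq n q. \<Sum>v\<in>Rq n q. F ((u, v), False, 0) + F ((u, v), True, 0))"
proof -
  have "(UNIV :: bool set) \<times> {0::nat} = {(False, 0), (True, 0)}"
    by (auto simp: UNIV_bool)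
  then have "sum F (qspace n q {0}) = (\<Sum>uv\<in>Rq n q \<times> Rq n q. \<Sum>yw\<in>{(False, 0), (True, 0)}. F (uv, yw))"
    unfolding qspace_def by (subst sum.cartesian_product) simp
  then show ?thesis
    by (simp add: sum.cartesian_product)
qed

definition qft :: "nat \<Rightarrow> int \<Rightarrow> qbasis \<Rightarrow> qbasis \<Rightarrow> complex" where
  "qft n q b' b = (case b' of ((u', v'), y', w') \<Rightarrow> case b of ((u, v), y, w) \<Rightarrow>
      if y' = y \<and> w' = w then unity_root q (coeff_dot n u' u + coeff_dot n v' v) / of_int q ^ n
      else 0)"

lemma unitary_qft:
  assumes q: "q > 0"
  shows "unitary_on (qspace n q {0}) (qft n q)"
  unfolding unitary_on_def
proof (intro ballI)
  fix i j
  assume "i \<in> qspace n q {0}" "j \<in> qspace n q {0}"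
  then obtain u1 v1 y1 u2 v2 y2 where i: "i = ((u1, v1), y1, 0)" and j: "j = ((u2, v2), y2, 0)"
    and R: "u1 \<in> Rq n q" "v1 \<in> Rq n q" "u2 \<in> Rq n q" "v2 \<in> Rq n q"
    by (auto simp: qspace_def)
  define Q :: complex where "Q = of_int q ^ n"
  define A where "A u = unity_root q (coeff_dot n u (\<lambda>i. u2 i - u1 i))" for u
  define B where "B v = unity_root q (coeff_dot n v (\<lambda>i. v2 i - v1 i))" for v
  have entry: "cnj (qft n q ((u, v), y, 0) i) * qft n q ((u, v), y, 0) j
      = (if y = y1 \<and> y = y2 then A u * B v / Q\<^sup>2 else 0)" for u v y
  proof -
    have "cnj (unity_root q (coeff_dot n u u1 + coeff_dot n v v1))
        * unity_root q (coeff_dot n u u2 + coeff_dot n v v2) = A u * B v"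
      unfolding A_def B_def cnj_unity_root coeff_dot_diff_right unity_root_add[symmetric]
      by (simp add: algebra_simps)
    moreover have "cnj Q = Q"
      by (simp add: Q_def)
    ultimately show ?thesis
      unfolding i j qft_def Q_def[symmetric] by (auto simp: power2_eq_square)
  qed
  have "(\<Sum>k\<in>qspace n q {0}. cnj (qft n q k i) * qft n q k j)
      = (if y1 = y2 then (\<Sum>u\<in>Rq n q. A u) * (\<Sum>v\<in>Rq n q. B v) / Q\<^sup>2 else 0)"
    unfolding sum_qspace_0 entry by (auto simp: sum_product sum_divide_distrib)
  also have "\<dots> = (if i = j then 1 else 0)"
    unfolding A_def B_def sum_unity_root_Rq_diff[OF q R(1,3)] sum_unity_root_Rq_diff[OF q R(2,4)]
    using q by (auto simp: i j Q_def power2_eq_square)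
  finally show "(\<Sum>k\<in>qspace n q {0}. cnj (qft n q k i) * qft n q k j) = (if i = j then 1 else 0)" .
qed

section \<open>Decryption of constant ciphertexts\<close>

(* The coefficients of s(1/x) = s_0 - s_(n-1) x - ... - s_1 x^(n-1) in R: the constant
   coefficient of u s is their dot product with u. *)
definition rq_reflect :: "nat \<Rightarrow> (nat \<Rightarrow> int) \<Rightarrow> nat \<Rightarrow> int" where
  "rq_reflect n s i = (if i = 0 then s 0 else - s (n - i))"

lemma rq_mult_const_coeff:
  assumes "n > 0"
  shows "rq_mult n q u s 0 = coeff_dot n u (rq_reflect n s) mod q"
proof -
  have inner: "(\<Sum>j<n. if i + j = 0 then u i * s j else if i + j = n then - (u i * s j) else 0)
      = u i * rq_reflect n s i" if "i < n" for i
  proof (cases "i = 0")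
    case True
    then have "(\<Sum>j<n. if i + j = 0 then u i * s j else if i + j = n then - (u i * s j) else 0)
        = (\<Sum>j<n. if j = 0 then u i * s j else 0)"
      by (intro sum.cong) auto
    with True assms show ?thesis
      by (simp add: rq_reflect_def)
  next
    case False
    with that have "(\<Sum>j<n. if i + j = 0 then u i * s j else if i + j = n then - (u i * s j) else 0)
        = (\<Sum>j<n. if j = n - i then - (u i * s j) else 0)"
      by (intro sum.cong) auto
    with False that show ?thesis
      by (simp add: rq_reflect_def)
  qed
  have "rq_mult n q u s 0
      = (\<Sum>i<n. \<Sum>j<n. if i + j = 0 then u i * s j else if i + j = n then - (u i * s j) else 0) mod q"
    unfolding rq_mult_def using assms by (simp only: if_True add_0)
  also have "\<dots> = coeff_dot n u (rq_reflect n s) mod q"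
    unfolding coeff_dot_def by (intro arg_cong[where f = "\<lambda>x. x mod q"] sum.cong refl inner) simp
  finally show ?thesis .
qed

lemma rq_reflect_dvd_diff:
  assumes dvd: "\<forall>i<n. q dvd rq_reflect n s i - rq_reflect n t i" and "j < n"
  shows "q dvd s j - t j"
proof (cases "j = 0")
  case True
  with dvd \<open>j < n\<close> show ?thesis
    by (auto simp: rq_reflect_def)
next
  case False
  with \<open>j < n\<close> have "n - j < n" "n - j \<noteq> 0" "n - (n - j) = j"
    by auto
  with dvd have "q dvd - s j - - t j"
    by (fastforce simp: rq_reflect_def)
  then show ?thesis
    by (simp add: dvd_diff_commute)
qed

definition const_coeffs :: "int \<Rightarrow> nat \<Rightarrow> int" where
  "const_coeffs x = (\<lambda>i. if i = 0 then x else 0)"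

lemma const_coeffs_0 [simp]: "const_coeffs x 0 = x"
  by (simp add: const_coeffs_def)

definition dec_bit :: "int \<Rightarrow> int \<Rightarrow> bool" where
  "dec_bit q t \<longleftrightarrow> \<not> cdist q t 0 < cdist q t (q div 2)"

lemma rlwe_dec_const_coeffs:
  "n > 0 \<Longrightarrow> rlwe_dec n q s (u, const_coeffs x) = dec_bit q ((x - coeff_dot n u (rq_reflect n s)) mod q)"
  unfolding rlwe_dec_def dec_bit_def rq_sub_def
  by (simp add: rq_mult_const_coeff const_coeffs_def mod_diff_right_eq Let_def)

definition dec_sign :: "int \<Rightarrow> int \<Rightarrow> int" where
  "dec_sign q t = (if dec_bit q t then -1 else 1)"

lemma dec_bit_iff:
  assumes q: "2 \<le> q" and t: "0 \<le> t" "t \<le> q div 2"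
  shows "dec_bit q t \<longleftrightarrow> q div 2 \<le> 2 * t"
proof -
  define h where "h = q div 2"
  have h: "2 * h \<le> q" "t \<le> h" "h < q"
    using q t by (auto simp: h_def)
  have "cdist q t 0 = t"
  proof (cases "t = 0")
    case False
    have "(0 - t) mod q = (- t + q) mod q"
      by simp
    also have "\<dots> = - t + q"
      using t h False by (intro mod_pos_pos_trivial) auto
    finally show ?thesis
      using t h by (simp add: cdist_def)
  qed (simp add: cdist_def)
  moreover have "cdist q t h = h - t"
  proof (cases "t = h")
    case False
    have "(t - h) mod q = (t - h + q) mod q"
      by simp
    also have "\<dots> = t - h + q"
      using t h False by (intro mod_pos_pos_trivial) auto
    finally show ?thesis
      using t h by (simp add: cdist_def min_def)
  qed (simp add: cdist_def)
  ultimately show ?thesis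
    unfolding dec_bit_def h_def by (simp add: not_less)
qed

lemma abs_dec_sign [simp]: "\<bar>dec_sign q t\<bar> = 1"
  by (simp add: dec_sign_def)

lemma sum_int_ivl_concat: "m \<le> n \<Longrightarrow> n \<le> p \<Longrightarrow> sum g {m..<n} + sum g {n..<p} = sum g {m..<p::int}"
  by (simp add: sum.union_disjoint[symmetric] ivl_disj_un)

lemma abs_sum_dec_sign_le:
  assumes q: "2 \<le> q"
  shows "\<bar>\<Sum>t\<in>{0..<q}. dec_sign q t\<bar> \<le> q - q div 2"
proof -
  define h where "h = q div 2"
  define m where "m = (h + 1) div 2"
  have hm: "0 \<le> m" "m \<le> h + 1" "h + 1 \<le> q"
    using q by (auto simp: h_def m_def)
  have "dec_sign q t = 1" if "t \<in> {0..<m}" for t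
    using that hm dec_bit_iff[OF q, of t] by (auto simp: dec_sign_def h_def m_def)
  then have first: "(\<Sum>t\<in>{0..<m}. dec_sign q t) = m"
    using hm by simp
  have "dec_sign q t = -1" if "t \<in> {m..<h + 1}" for t
    using that hm dec_bit_iff[OF q, of t] by (auto simp: dec_sign_def h_def m_def)
  then have second: "(\<Sum>t\<in>{m..<h + 1}. dec_sign q t) = - (h + 1 - m)"
    using hm by simp
  have "\<bar>\<Sum>t\<in>{h + 1..<q}. dec_sign q t\<bar> \<le> (\<Sum>t\<in>{h + 1..<q}. \<bar>dec_sign q t\<bar>)"
    by (rule sum_abs)
  also have "\<dots> = q - (h + 1)"
    using hm by simp
  finally have rest: "\<bar>\<Sum>t\<in>{h + 1..<q}. dec_sign q t\<bar> \<le> q - (h + 1)" .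
  have "(\<Sum>t\<in>{0..<q}. dec_sign q t)
      = (\<Sum>t\<in>{0..<m}. dec_sign q t) + (\<Sum>t\<in>{m..<h + 1}. dec_sign q t) + (\<Sum>t\<in>{h + 1..<q}. dec_sign q t)"
    using hm sum_int_ivl_concat[of 0 m "h + 1" "dec_sign q"] sum_int_ivl_concat[of 0 "h + 1" q "dec_sign q"]
    by simp
  moreover have "\<bar>2 * m - h - 1\<bar> \<le> 1"
    unfolding m_def by auto
  ultimately have "\<bar>\<Sum>t\<in>{0..<q}. dec_sign q t\<bar> \<le> q - h"
    using first second rest by linarith
  then show ?thesis
    by (simp add: h_def)
qed

lemma norm_zq_dft_dec_sign_0_le:
  assumes "2 \<le> q"
  shows "cmod (zq_dft q (of_int \<circ> dec_sign q) 0) \<le> (of_int q + 1) / 2"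
proof -
  have "zq_dft q (of_int \<circ> dec_sign q) 0 = of_int (\<Sum>t\<in>{0..<q}. dec_sign q t)"
    by (simp add: zq_dft_def)
  then have "cmod (zq_dft q (of_int \<circ> dec_sign q) 0) = \<bar>of_int (\<Sum>t\<in>{0..<q}. dec_sign q t)\<bar>"
    by (simp only: norm_of_int)
  also have "\<dots> \<le> of_int (q - q div 2)"
    using abs_sum_dec_sign_le[OF assms] by (metis of_int_abs of_int_le_iff)
  also have "\<dots> \<le> (of_int q + 1) / 2"
  proof -
    have "2 * (q - q div 2) \<le> q + 1"
      by presburger
    then show ?thesis
      by (simp add: field_simps flip: of_int_le_iff)
  qed
  finally show ?thesis .
qed

section \<open>The one-query algorithm\<close>

definition is_const :: "(nat \<Rightarrow> int) \<Rightarrow> bool" where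
  "is_const v \<longleftrightarrow> (\<forall>i>0. v i = 0)"

definition initial_amp :: "nat \<Rightarrow> int \<Rightarrow> complex" where
  "initial_amp n q = complex_of_real (1 / sqrt (2 * real_of_int q ^ (n + 1)))"

(* The answer qubit starts in (|0> - |1>) / sqrt 2, so the query acts as the phase (-1)^Dec. *)
definition initial_state :: "nat \<Rightarrow> int \<Rightarrow> qbasis \<Rightarrow> complex" where
  "initial_state n q b = (case b of ((u, v), y, w) \<Rightarrow>
      if is_const v then (if y then - initial_amp n q else initial_amp n q) else 0)"

lemma sum_Rq_const:
  assumes "n > 0"
  shows "(\<Sum>v\<in>Rq n q. if is_const v then F v else 0) = (\<Sum>x\<in>{0..<q}. F (const_coeffs x))"
proof -
  have "bij_betw const_coeffs {0..<q} {v \<in> Rq n q. is_const v}"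
    by (rule bij_betw_byWitness[where f' = "\<lambda>v. v 0"])
       (use assms in \<open>auto simp: is_const_def const_coeffs_def Rq_def fun_eq_iff\<close>)
  then show ?thesis
    by (simp add: sum.inter_filter[symmetric] finite_Rq sum.reindex_bij_betw)
qed

lemma coeff_dot_const_coeffs: "n > 0 \<Longrightarrow> coeff_dot n v (const_coeffs x) = v 0 * x"
  by (simp add: coeff_dot_def const_coeffs_def if_distrib cong: if_cong)

lemma norm_initial_amp_sq:
  assumes "q > 0"
  shows "(cmod (initial_amp n q))\<^sup>2 = 1 / (2 * real_of_int q ^ (n + 1))"
proof -
  have pos: "0 < 2 * real_of_int q ^ (n + 1)"
    using assms by simp
  then have "cmod (initial_amp n q) = 1 / sqrt (2 * real_of_int q ^ (n + 1))"
    unfolding initial_amp_def norm_of_real by simp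
  with pos show ?thesis
    by (simp add: power_divide less_imp_le del: power_Suc)
qed

lemma sum_norm_initial_state:
  assumes n: "n > 0" and q: "q > 0"
  shows "(\<Sum>b\<in>qspace n q {0}. (cmod (initial_state n q b))\<^sup>2) = 1"
proof -
  have "(\<Sum>b\<in>qspace n q {0}. (cmod (initial_state n q b))\<^sup>2)
      = (\<Sum>u\<in>Rq n q. \<Sum>v\<in>Rq n q. if is_const v then 2 * (cmod (initial_amp n q))\<^sup>2 else 0)"
    unfolding sum_qspace_0 by (intro sum.cong refl) (simp add: initial_state_def)
  also have "\<dots> = (\<Sum>u\<in>Rq n q. \<Sum>x\<in>{0..<q}. 2 * (cmod (initial_amp n q))\<^sup>2)"
    by (simp only: sum_Rq_const[OF n])
  also have "\<dots> = 1"
    using q by (simp add: card_Rq norm_initial_amp_sq)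
  finally show ?thesis .
qed

lemma query_oracle_initial_state:
  assumes "n > 0"
  shows "query_oracle (rlwe_dec n q s) (initial_state n q) ((u, v), y, w)
    = (if is_const v
       then (if y then - initial_amp n q else initial_amp n q)
            * of_int (dec_sign q ((v 0 - coeff_dot n u (rq_reflect n s)) mod q))
       else 0)"
proof (cases "is_const v")
  case True
  then have "v = const_coeffs (v 0)"
    by (auto simp: is_const_def const_coeffs_def fun_eq_iff)
  then have "rlwe_dec n q s (u, v) = dec_bit q ((v 0 - coeff_dot n u (rq_reflect n s)) mod q)"
    by (metis rlwe_dec_const_coeffs[OF assms])
  with True show ?thesis
    by (auto simp: query_oracle_def initial_state_def dec_sign_def)
qed (simp add: query_oracle_def initial_state_def)

lemma apply_qft:
  "apply_mat (qspace n q {0}) (qft n q) \<phi> ((u', v'), y', 0)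
     = (\<Sum>u\<in>Rq n q. \<Sum>v\<in>Rq n q.
          unity_root q (coeff_dot n u' u + coeff_dot n v' v) / of_int q ^ n * \<phi> ((u, v), y', 0))"
  unfolding apply_mat_def sum_qspace_0 by (intro sum.cong refl) (cases y'; simp add: qft_def)

definition final_state :: "nat \<Rightarrow> int \<Rightarrow> (nat \<Rightarrow> int) \<Rightarrow> qbasis \<Rightarrow> complex" where
  "final_state n q s = apply_mat (qspace n q {0}) (qft n q) (query_oracle (rlwe_dec n q s) (initial_state n q))"

lemma sum_norm_final_state:
  assumes "n > 0" and "q > 0"
  shows "(\<Sum>b\<in>qspace n q {0}. (cmod (final_state n q s b))\<^sup>2) = 1"
  using sum_norm_apply_mat_unitary[OF finite_qspace unitary_qft] sum_norm_query_oracle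
    sum_norm_initial_state assms
  by (simp add: final_state_def)

lemma final_amplitude:
  assumes n: "n > 0" and q: "q > 0"
  shows "final_state n q s ((u', v'), y', 0)
     = (if y' then - initial_amp n q else initial_amp n q) * zq_dft q (of_int \<circ> dec_sign q) (v' 0)
       * (if \<forall>i<n. q dvd u' i + v' 0 * rq_reflect n s i then 1 else 0)"
proof -
  define \<sigma> where "\<sigma> = (if y' then - initial_amp n q else initial_amp n q)"
  define Q :: complex where "Q = of_int q ^ n"
  define g :: "int \<Rightarrow> complex" where "g = of_int \<circ> dec_sign q"
  define L where "L u = coeff_dot n u (rq_reflect n s)" for u
  define d where "d i = u' i + v' 0 * rq_reflect n s i" for i
  have "final_state n q s ((u', v'), y', 0)
      = (\<Sum>u\<in>Rq n q. \<Sum>v\<in>Rq n q. if is_const v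
           then unity_root q (coeff_dot n u' u + coeff_dot n v' v) / Q * \<sigma> * g ((v 0 - L u) mod q) else 0)"
    unfolding final_state_def apply_qft query_oracle_initial_state[OF n] by (intro sum.cong refl) (simp add: \<sigma>_def g_def L_def Q_def)
  also have "\<dots> = (\<Sum>u\<in>Rq n q. \<Sum>x\<in>{0..<q}.
      unity_root q (coeff_dot n u' u + v' 0 * x) / Q * \<sigma> * g ((x - L u) mod q))"
    by (simp add: sum_Rq_const[OF n] coeff_dot_const_coeffs[OF n])
  also have "\<dots> = (\<Sum>u\<in>Rq n q. \<sigma> / Q * unity_root q (coeff_dot n u' u)
      * (\<Sum>x\<in>{0..<q}. unity_root q (v' 0 * x) * g ((x - L u) mod q)))"
    by (simp add: unity_root_add sum_distrib_left mult_ac)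
  also have "\<dots> = (\<Sum>u\<in>Rq n q. \<sigma> / Q * zq_dft q g (v' 0) * unity_root q (coeff_dot n u d))"
  proof (rule sum.cong[OF refl])
    fix u
    have "coeff_dot n u' u + v' 0 * L u = coeff_dot n u d"
      by (simp add: coeff_dot_def L_def d_def sum_distrib_left sum.distrib algebra_simps)
    then show "\<sigma> / Q * unity_root q (coeff_dot n u' u) * (\<Sum>x\<in>{0..<q}. unity_root q (v' 0 * x) * g ((x - L u) mod q))
        = \<sigma> / Q * zq_dft q g (v' 0) * unity_root q (coeff_dot n u d)"
      by (simp add: zq_dft_shift[OF q] flip: unity_root_add)
  qed
  also have "\<dots> = \<sigma> / Q * zq_dft q g (v' 0) * (\<Sum>u\<in>Rq n q. unity_root q (coeff_dot n u d))"
    by (simp add: sum_distrib_left)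
  also have "\<dots> = \<sigma> * zq_dft q g (v' 0) * (if \<forall>i<n. q dvd d i then 1 else 0)"
    using q by (auto simp: sum_unity_root_Rq Q_def)
  finally show ?thesis
    unfolding \<sigma>_def g_def d_def .
qed

(* Arbitrary when q divides v' 0; these outcomes are accounted for separately. *)
definition recover_key :: "nat \<Rightarrow> int \<Rightarrow> qbasis \<Rightarrow> nat \<Rightarrow> int" where
  "recover_key n q b = (case b of ((u', v'), y, w) \<Rightarrow>
      SOME s. s \<in> Rq n q \<and> (\<forall>i<n. q dvd u' i + v' 0 * rq_reflect n s i))"

lemma recover_key_eq:
  assumes q: "prime q" and s: "s \<in> Rq n q" and v: "\<not> q dvd v' 0"
    and u: "\<forall>i<n. q dvd u' i + v' 0 * rq_reflect n s i"
  shows "recover_key n q ((u', v'), y, w) = s"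
  unfolding recover_key_def prod.case
proof (rule some_equality)
  show "s \<in> Rq n q \<and> (\<forall>i<n. q dvd u' i + v' 0 * rq_reflect n s i)"
    using s u by simp
next
  fix t
  assume t: "t \<in> Rq n q \<and> (\<forall>i<n. q dvd u' i + v' 0 * rq_reflect n t i)"
  have "q dvd rq_reflect n s i - rq_reflect n t i" if "i < n" for i
  proof -
    have "q dvd (u' i + v' 0 * rq_reflect n s i) - (u' i + v' 0 * rq_reflect n t i)"
      by (rule dvd_diff) (use u t that in auto)
    then have "q dvd v' 0 * (rq_reflect n s i - rq_reflect n t i)"
      by (simp add: algebra_simps)
    with q v show ?thesis
      using prime_dvd_mult_iff by blast
  qed
  then have "\<forall>j<n. q dvd s j - t j"
    using rq_reflect_dvd_diff by blast
  with s t show "t = s"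
    using Rq_eq_iff_dvd[of t n q s] by blast
qed

lemma sum_Rq_indicator_dvd:
  assumes "q > 0"
  shows "(\<Sum>u\<in>Rq n q. if \<forall>i<n. q dvd u i then 1 else 0 :: real) = 1"
proof -
  have zero: "(\<lambda>_. 0) \<in> Rq n q"
    using assms by (simp add: Rq_def)
  have "(\<Sum>u\<in>Rq n q. if \<forall>i<n. q dvd u i then 1 else 0 :: real) = (\<Sum>u\<in>Rq n q. if (\<lambda>_. 0) = u then 1 else 0)"
    using Rq_eq_iff_dvd[OF zero] by (intro sum.cong refl) simp
  also have "\<dots> = 1"
    using zero by (simp add: finite_Rq)
  finally show ?thesis .
qed

lemma sum_Rq_indicator_coeff_0:
  assumes q: "q > 0" and n: "n > 0"
  shows "(\<Sum>v\<in>Rq n q. if v 0 = 0 then 1 else 0 :: real) = real_of_int q ^ (n - 1)"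
proof -
  have "(\<Sum>v\<in>Rq n q. if v 0 = 0 then 1 else 0 :: real)
      = (\<Sum>v\<in>Rq n q. \<Prod>i<n. if i = 0 then (if v i = 0 then 1 else 0) else 1)"
    using n by (intro sum.cong refl) simp
  also have "\<dots> = (\<Prod>i<n. \<Sum>x\<in>{0..<q}. if i = 0 then (if x = 0 then 1 else 0) else 1 :: real)"
    by (rule sum_prod_Rq)
  also have "\<dots> = (\<Prod>i<n. if i = 0 then 1 else real_of_int q)"
    using q by (intro prod.cong refl) auto
  also have "\<dots> = real_of_int q ^ (n - 1)"
  proof -
    obtain m where "n = Suc m"
      using n by (cases n) auto
    then show ?thesis
      by (simp only: prod.lessThan_Suc_shift) simp
  qed
  finally show ?thesis .
qed

lemma sum_norm_final_state_coeff_0: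
  assumes n: "n > 0" and q: "q > 0"
  shows "(\<Sum>b\<in>qspace n q {0}. if snd (fst b) 0 = 0 then (cmod (final_state n q s b))\<^sup>2 else 0)
       = (cmod (zq_dft q (of_int \<circ> dec_sign q) 0))\<^sup>2 / (real_of_int q)\<^sup>2"
proof -
  define K where "K = (cmod (initial_amp n q))\<^sup>2 * (cmod (zq_dft q (of_int \<circ> dec_sign q) 0))\<^sup>2"
  have entry: "(if snd (fst ((u, v), y, 0::nat)) 0 = 0 then (cmod (final_state n q s ((u, v), y, 0)))\<^sup>2 else 0)
      = K * ((if v 0 = 0 then 1 else 0) * (if \<forall>i<n. q dvd u i then 1 else 0))" for u v y
    unfolding final_amplitude[OF n q] K_def by (auto simp: norm_mult power_mult_distrib)
  have "(\<Sum>b\<in>qspace n q {0}. if snd (fst b) 0 = 0 then (cmod (final_state n q s b))\<^sup>2 else 0)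
      = 2 * K * (\<Sum>u\<in>Rq n q. if \<forall>i<n. q dvd u i then 1 else 0) * (\<Sum>v\<in>Rq n q. if v 0 = 0 then 1 else 0)"
    unfolding sum_qspace_0 entry by (simp add: sum_distrib_left sum_distrib_right mult_ac)
  also have "\<dots> = 2 * K * real_of_int q ^ (n - 1)"
    by (simp add: sum_Rq_indicator_dvd[OF q] sum_Rq_indicator_coeff_0[OF q n])
  also have "\<dots> = (cmod (zq_dft q (of_int \<circ> dec_sign q) 0))\<^sup>2 / (real_of_int q)\<^sup>2"
  proof -
    have "real_of_int q ^ (n + 1) = real_of_int q ^ (n - 1) * (real_of_int q)\<^sup>2"
      using n by (simp add: power_add[symmetric])
    then show ?thesis
      using q unfolding K_def norm_initial_amp_sq[OF q] by (simp add: field_simps)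
  qed
  finally show ?thesis .
qed

lemma final_state_eq_0_or_recover_key:
  assumes n: "n > 0" and q: "prime q" and s: "s \<in> Rq n q"
    and b: "b \<in> qspace n q {0}" and v0: "snd (fst b) 0 \<noteq> 0"
  shows "final_state n q s b = 0 \<or> recover_key n q b = s"
proof -
  from b obtain u' v' y' where b: "b = ((u', v'), y', 0)" and "v' \<in> Rq n q"
    by (auto simp: qspace_def)
  with v0 n have "0 < v' 0" "v' 0 < q"
    by (auto simp: Rq_def le_less)
  then have "\<not> q dvd v' 0"
    using zdvd_imp_le by fastforce
  moreover have "q > 0"
    using q prime_gt_0_int by blast
  ultimately show ?thesis
    unfolding b final_amplitude[OF n \<open>q > 0\<close>] using recover_key_eq[OF q s, of v'] by auto
qed

lemma one_query_success_ge:
  assumes n: "n > 0" and q: "prime q" and s: "s \<in> Rq n q"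
  shows "one_query_success n q {0} (initial_state n q) (qft n q) (recover_key n q) (rlwe_dec n q s) s
      \<ge> 1 - (cmod (zq_dft q (of_int \<circ> dec_sign q) 0))\<^sup>2 / (real_of_int q)\<^sup>2"
proof -
  have q0: "q > 0"
    using q prime_gt_0_int by blast
  define S where "S = qspace n q {0}"
  define p where "p b = (cmod (final_state n q s b))\<^sup>2" for b
  have "p b \<le> (if snd (fst b) 0 = 0 then p b else 0) + (if recover_key n q b = s then p b else 0)"
    if "b \<in> S" for b
    using final_state_eq_0_or_recover_key[OF n q s, of b] that by (auto simp: S_def p_def)
  then have "(\<Sum>b\<in>S. p b)
      \<le> (\<Sum>b\<in>S. if snd (fst b) 0 = 0 then p b else 0) + (\<Sum>b\<in>S. if recover_key n q b = s then p b else 0)"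
    by (simp add: sum_mono flip: sum.distrib)
  then show ?thesis
    using sum_norm_final_state[OF n q0] sum_norm_final_state_coeff_0[OF n q0]
    unfolding S_def p_def one_query_success_def final_state_def[symmetric]
    by (simp add: sum.inter_filter finite_qspace)
qed

lemma one_query_success_ge_7_16:
  assumes n: "n > 0" and q: "prime q" and s: "s \<in> Rq n q"
  shows "one_query_success n q {0} (initial_state n q) (qft n q) (recover_key n q) (rlwe_dec n q s) s
      \<ge> 7 / 16"
proof -
  define G where "G = cmod (zq_dft q (of_int \<circ> dec_sign q) 0)"
  have q2: "2 \<le> q"
    using q prime_ge_2_int by blast
  then have "G \<le> (real_of_int q + 1) / 2" "2 \<le> real_of_int q"
    unfolding G_def using norm_zq_dft_dec_sign_0_le by simp_all
  then have "G / real_of_int q \<le> 3 / 4"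
    by (simp add: field_simps)
  then have "(G / real_of_int q)\<^sup>2 \<le> (3 / 4)\<^sup>2"
    by (rule power_mono) (use q2 in \<open>simp add: G_def\<close>)
  then have "G\<^sup>2 / (real_of_int q)\<^sup>2 \<le> 9 / 16"
    by (simp add: power_divide)
  with one_query_success_ge[OF n q s] show ?thesis
    unfolding G_def by linarith
qed

lemma valid_one_query_alg_qft:
  "n > 0 \<Longrightarrow> q > 0 \<Longrightarrow> valid_one_query_alg n q {0} (initial_state n q) (qft n q)"
  by (simp add: valid_one_query_alg_def sum_norm_initial_state unitary_qft)

lemma four_div_pi_sq_le: "4 / pi\<^sup>2 \<le> 7 / 16"
proof -
  have "31 / 10 \<le> pi"
    using pi_approx(1) by simp
  then have "(31 / 10)\<^sup>2 \<le> pi\<^sup>2"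
    by (rule power_mono) simp
  then show ?thesis
    by (simp add: field_simps)
qed

theorem corollary3:
  shows "\<exists>\<epsilon> :: int \<Rightarrow> real. (\<epsilon> \<longlongrightarrow> 0) at_top \<and>
    (\<forall>(n::nat) (q::int). n > 0 \<and> (\<exists>k::nat. n = 2 ^ k) \<and> prime q \<longrightarrow>
      (\<exists>W \<psi>0 U out. valid_one_query_alg n q W \<psi>0 U \<and>
         (\<forall>s \<in> Rq n q.
            one_query_success n q W \<psi>0 U out (rlwe_dec n q s) s \<ge> 4 / pi^2 - \<epsilon> q)))"
proof -
  have "\<exists>W \<psi>0 U out. valid_one_query_alg n q W \<psi>0 U \<and>
      (\<forall>s \<in> Rq n q. one_query_success n q W \<psi>0 U out (rlwe_dec n q s) s \<ge> 4 / pi^2 - 0)"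
    if n: "n > 0" and q: "prime q" for n :: nat and q :: int
  proof (intro exI conjI ballI)
    show "valid_one_query_alg n q {0} (initial_state n q) (qft n q)"
      using n q by (simp add: valid_one_query_alg_qft prime_gt_0_int)
    fix s
    assume "s \<in> Rq n q"
    show "one_query_success n q {0} (initial_state n q) (qft n q) (recover_key n q) (rlwe_dec n q s) s
        \<ge> 4 / pi^2 - 0"
      using one_query_success_ge_7_16[OF n q \<open>s \<in> Rq n q\<close>] four_div_pi_sq_le by linarith
  qed
  then show ?thesis
    by (intro exI[of _ "\<lambda>_. 0"] conjI tendsto_const) auto
qed

end
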